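(* Let $f\in\mathbb{C}[[y,t,x]]$, $\lambda\in\mathbb{C}$, and let $P:\mathbb{C}\to\mathbb{C}$ be a monic polynomial. Then there exist $g,h\in\mathbb{C}[[y,t,x]]$ such that $\operatorname{Conv}_\varphi(g)=P^{-1}(\operatorname{Conv}_\varphi(f))$ and $\operatorname{Conv}_\varphi(h)=\lambda\cdot\operatorname{Conv}_\varphi(f)=\{\lambda s: s\in\operatorname{Conv}_\varphi(f)\}$.
   Context: Let $x=(x_1,\dots,x_n)$. A formal power series is convergent if its coefficients satisfy $|a_\alpha|\le C^{|\alpha|}$ for some $C$ and all $\alpha\ne0$. Fix a convergent power series $\varphi(t,x)=\sum_{j\ge1}b_j(x)t^j$ with convergent $b_j(x)\in\mathbb{C}[[x]]$ and $b_1(0)=1$. For $s\in\mathbb{C}$ put $\varphi(s,t,x)=s\,b_1(x)t+\sum_{j\ge2}b_j(x)t^j$. For $f\in\mathbb{C}[[y,t,x]]$, $\operatorname{Conv}_\varphi(f)=\{s\in\mathbb{C}: f(\varphi(s,t,x),t,x)\text{ converges as a power series in }(t,x)\}$. *)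

theory Defs
  imports Complex_Main "HOL-Computational_Algebra.Polynomial"
begin

text \<open>Multi-indices for x = (x_1,...,x_n) are functions nat => nat vanishing at
  all i >= n (indices 0..n-1 stand for x_1..x_n).  Coefficients at other
  (invalid) indices are irrelevant and never used.\<close>

definition valid_idx :: "nat \<Rightarrow> (nat \<Rightarrow> nat) \<Rightarrow> bool" where
  "valid_idx n \<gamma> \<longleftrightarrow> (\<forall>i\<ge>n. \<gamma> i = 0)"

definition idx_size :: "nat \<Rightarrow> (nat \<Rightarrow> nat) \<Rightarrow> nat" where
  "idx_size n \<gamma> = (\<Sum>i<n. \<gamma> i)"

text \<open>A power series in (t,x): coefficient of t^a x^gamma is F (a, gamma).\<close>
type_synonym ser = "nat \<times> (nat \<Rightarrow> nat) \<Rightarrow> complex"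

text \<open>A power series in (y,t,x): coefficient of y^k t^a x^gamma is f k a gamma.\<close>
type_synonym ser3 = "nat \<Rightarrow> nat \<Rightarrow> (nat \<Rightarrow> nat) \<Rightarrow> complex"

definition conv_x :: "nat \<Rightarrow> ((nat \<Rightarrow> nat) \<Rightarrow> complex) \<Rightarrow> bool" where
  "conv_x n B \<longleftrightarrow> (\<exists>C::real. \<forall>\<gamma>. valid_idx n \<gamma> \<and> \<gamma> \<noteq> (\<lambda>_. 0) \<longrightarrow>
      norm (B \<gamma>) \<le> C ^ idx_size n \<gamma>)"

definition conv_tx :: "nat \<Rightarrow> ser \<Rightarrow> bool" where
  "conv_tx n F \<longleftrightarrow> (\<exists>C::real. \<forall>a \<gamma>. valid_idx n \<gamma> \<and> (a, \<gamma>) \<noteq> (0, (\<lambda>_. 0)) \<longrightarrow>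
      norm (F (a, \<gamma>)) \<le> C ^ (a + idx_size n \<gamma>))"

definition ser_one :: ser where
  "ser_one = (\<lambda>(a, \<gamma>). if a = 0 \<and> \<gamma> = (\<lambda>_. 0) then 1 else 0)"

definition ser_mult :: "ser \<Rightarrow> ser \<Rightarrow> ser" where
  "ser_mult F G = (\<lambda>(m, \<beta>). \<Sum>a\<le>m. \<Sum>\<gamma>\<in>{\<gamma>. \<forall>i. \<gamma> i \<le> \<beta> i}.
      F (a, \<gamma>) * G (m - a, (\<lambda>i. \<beta> i - \<gamma> i)))"

primrec ser_pow :: "ser \<Rightarrow> nat \<Rightarrow> ser" where
  "ser_pow F 0 = ser_one"
| "ser_pow F (Suc k) = ser_mult F (ser_pow F k)"

text \<open>phi(s,t,x) = s b_1(x) t + sum_{j>=2} b_j(x) t^j; b j gamma is the coefficient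
  of x^gamma in b_j (b 0 is ignored).\<close>
definition phi_s :: "(nat \<Rightarrow> (nat \<Rightarrow> nat) \<Rightarrow> complex) \<Rightarrow> complex \<Rightarrow> ser" where
  "phi_s b s = (\<lambda>(j, \<gamma>). if j = 0 then 0 else if j = 1 then s * b 1 \<gamma> else b j \<gamma>)"

definition phi_ser :: "(nat \<Rightarrow> (nat \<Rightarrow> nat) \<Rightarrow> complex) \<Rightarrow> ser" where
  "phi_ser b = (\<lambda>(j, \<gamma>). if j = 0 then 0 else b j \<gamma>)"

text \<open>Substitution f(P(t,x), t, x) for P without t^0 term:
  sum_k f_k(t,x) P^k, where only k <= m contributes to the t^m coefficient.\<close>
definition subst_y :: "ser3 \<Rightarrow> ser \<Rightarrow> ser" where
  "subst_y f P = (\<lambda>(m, \<beta>). \<Sum>k\<le>m. ser_mult (\<lambda>(a, \<gamma>). f k a \<gamma>) (ser_pow P k) (m, \<beta>))"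

definition Conv_phi :: "nat \<Rightarrow> (nat \<Rightarrow> (nat \<Rightarrow> nat) \<Rightarrow> complex) \<Rightarrow> ser3 \<Rightarrow> complex set" where
  "Conv_phi n b f = {s. conv_tx n (subst_y f (phi_s b s))}"

end

theory Submission
  imports Defs
begin

(*
  Write phi(s,t,x) = s*L + R with L = b_1(x) t and R = sum_{j>=2} b_j(x) t^j.
  Expanding phi(s)^k in powers of s gives polynomial coefficients pow_part b k j, and hence
    f(phi(s,t,x),t,x) = sum_j s^j * e_j(t,x),   e_j = s_coeff b f j,
  where e_j only has t-degree >= j.  So Conv_phi n b f = conv_set n e is the set of s for
  which the series sum_j s^j e_j converges.

  The heart of the proof is the converse (realisation): since b_1(0) = 1, the "diagonal"
  coefficient of s^k t^k in phi(s)^k is 1, so for ANY family e one can solve the triangular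
  system s_coeff b g = e recursively for g.  Hence the sets Conv_phi n b g are exactly the
  sets conv_set n e, and it suffices to show that this class is closed under preimages by
  polynomials (substitute s := P(s) and stretch t := t^D with D >= deg P) and under the
  maps s |-> c*s (a preimage under s/c if c /= 0; for c = 0 the image is {} or {0}, and
  {0} is realised by the divergent family e_j = j! t^j).
*)

definition phi_lin :: "(nat \<Rightarrow> (nat \<Rightarrow> nat) \<Rightarrow> complex) \<Rightarrow> ser" where
  "phi_lin b = (\<lambda>(a, \<gamma>). if a = 1 then b 1 \<gamma> else 0)"

definition phi_rest :: "(nat \<Rightarrow> (nat \<Rightarrow> nat) \<Rightarrow> complex) \<Rightarrow> ser" where
  "phi_rest b = (\<lambda>(a, \<gamma>). if 2 \<le> a then b a \<gamma> else 0)"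

lemma phi_s_split: "phi_s b s = (\<lambda>i. s * phi_lin b i + phi_rest b i)"
  by (auto simp: phi_s_def phi_lin_def phi_rest_def fun_eq_iff)

lemma ser_mult_apply:
  "ser_mult F G (m, \<beta>) =
     (\<Sum>a\<le>m. \<Sum>\<gamma>\<in>{\<gamma>. \<forall>i. \<gamma> i \<le> \<beta> i}. F (a, \<gamma>) * G (m - a, \<lambda>i. \<beta> i - \<gamma> i))"
  by (simp add: ser_mult_def)

lemma ser_mult_affine_left:
  "ser_mult (\<lambda>i. s * F i + G i) H = (\<lambda>i. s * ser_mult F H i + ser_mult G H i)"
  by (auto simp: ser_mult_def fun_eq_iff algebra_simps sum.distrib sum_distrib_left)

lemma ser_mult_sum_right:
  "ser_mult F (\<lambda>i. \<Sum>j\<in>J. c j * G j i) i = (\<Sum>j\<in>J. c j * ser_mult F (G j) i)"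
  by (cases i) (simp add: ser_mult_def sum_distrib_left sum_distrib_right algebra_simps sum.swap[of _ J])

lemma ser_mult_zero_right [simp]: "ser_mult F (\<lambda>_. 0) = (\<lambda>_. 0)"
  by (auto simp: ser_mult_def fun_eq_iff)

lemma ser_mult_zeroI:
  assumes "\<And>a \<gamma>. a \<le> m \<Longrightarrow> F (a, \<gamma>) = 0 \<or> G (m - a, \<lambda>i. \<beta> i - \<gamma> i) = 0"
  shows "ser_mult F G (m, \<beta>) = 0"
  unfolding ser_mult_def using assms by (auto intro!: sum.neutral)

(* pow_part b k j is the coefficient of s^j in phi(s)^k = (s*L + R)^k, built by the
   recursion (s*L + R)^(k+1) = s*L*(s*L + R)^k + R*(s*L + R)^k. *)
primrec pow_part :: "(nat \<Rightarrow> (nat \<Rightarrow> nat) \<Rightarrow> complex) \<Rightarrow> nat \<Rightarrow> nat \<Rightarrow> ser" where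
  "pow_part b 0 j = (if j = 0 then ser_one else (\<lambda>_. 0))"
| "pow_part b (Suc k) j = (\<lambda>i. (if j = 0 then 0 else ser_mult (phi_lin b) (pow_part b k (j - 1)) i)
                                + ser_mult (phi_rest b) (pow_part b k j) i)"

lemma pow_part_above: "k < j \<Longrightarrow> pow_part b k j = (\<lambda>_. 0)"
  by (induction k arbitrary: j) simp_all

lemma ser_pow_phi_s: "ser_pow (phi_s b s) k = (\<lambda>i. \<Sum>j\<le>k. s ^ j * pow_part b k j i)"
proof (induction k)
  case 0
  show ?case by (simp add: fun_eq_iff)
next
  case (Suc k)
  show ?case
  proof
    fix i
    have "ser_pow (phi_s b s) (Suc k) i =
        s * (\<Sum>j\<le>k. s ^ j * ser_mult (phi_lin b) (pow_part b k j) i)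
        + (\<Sum>j\<le>k. s ^ j * ser_mult (phi_rest b) (pow_part b k j) i)"
      unfolding ser_pow.simps Suc.IH
      by (subst phi_s_split) (simp only: ser_mult_affine_left ser_mult_sum_right)
    also have "\<dots> = (\<Sum>j\<le>Suc k. s ^ j * pow_part b (Suc k) j i)"
    proof -
      have lin: "(\<Sum>j\<le>Suc k. s ^ j * (if j = 0 then 0 else ser_mult (phi_lin b) (pow_part b k (j - 1)) i))
          = s * (\<Sum>j\<le>k. s ^ j * ser_mult (phi_lin b) (pow_part b k j) i)"
        by (subst sum.atMost_Suc_shift) (simp add: sum_distrib_left algebra_simps)
      have rest: "(\<Sum>j\<le>Suc k. s ^ j * ser_mult (phi_rest b) (pow_part b k j) i)
          = (\<Sum>j\<le>k. s ^ j * ser_mult (phi_rest b) (pow_part b k j) i)"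
        by (simp add: pow_part_above)
      show ?thesis by (simp only: pow_part.simps distrib_left sum.distrib lin rest)
    qed
    finally show "ser_pow (phi_s b s) (Suc k) i = (\<Sum>j\<le>Suc k. s ^ j * pow_part b (Suc k) j i)" .
  qed
qed

(* Orders in t: L has t-order 1 and R has t-order 2, so pow_part b k j has t-order >= 2k - j. *)
lemma pow_part_low_order: "j \<le> k \<Longrightarrow> m + j < 2 * k \<Longrightarrow> pow_part b k j (m, \<beta>) = 0"
proof (induction k arbitrary: j m \<beta>)
  case 0
  then show ?case by simp
next
  case (Suc k)
  have lin: "ser_mult (phi_lin b) (pow_part b k (j - 1)) (m, \<beta>) = 0" if "j \<noteq> 0"
  proof (rule ser_mult_zeroI)
    fix a \<gamma> assume "a \<le> m"
    then show "phi_lin b (a, \<gamma>) = 0 \<or> pow_part b k (j - 1) (m - a, \<lambda>i. \<beta> i - \<gamma> i) = 0"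
      using Suc.prems that by (cases "a = 1") (auto simp: phi_lin_def intro!: Suc.IH)
  qed
  have rest: "ser_mult (phi_rest b) (pow_part b k j) (m, \<beta>) = 0"
  proof (rule ser_mult_zeroI)
    fix a \<gamma> assume "a \<le> m"
    then show "phi_rest b (a, \<gamma>) = 0 \<or> pow_part b k j (m - a, \<lambda>i. \<beta> i - \<gamma> i) = 0"
      using Suc.prems
      by (cases "2 \<le> a"; cases "j \<le> k") (auto simp: phi_rest_def pow_part_above intro!: Suc.IH)
  qed
  show ?case using lin rest by simp
qed

(* The top coefficient (s*L)^k is concentrated in t-degree k ... *)
lemma pow_part_diag_degree: "m \<noteq> k \<Longrightarrow> pow_part b k k (m, \<beta>) = 0"
proof (induction k arbitrary: m \<beta>)
  case 0
  then show ?case by (simp add: ser_one_def)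
next
  case (Suc k)
  have "ser_mult (phi_lin b) (pow_part b k k) (m, \<beta>) = 0"
  proof (rule ser_mult_zeroI)
    fix a \<gamma> assume "a \<le> m"
    then show "phi_lin b (a, \<gamma>) = 0 \<or> pow_part b k k (m - a, \<lambda>i. \<beta> i - \<gamma> i) = 0"
      using Suc.prems by (cases "a = 1") (auto simp: phi_lin_def intro!: Suc.IH)
  qed
  then show ?case by (simp add: pow_part_above)
qed

(* ... and its constant term is b_1(0)^k = 1: this is what makes the system solvable. *)
lemma pow_part_diag_one:
  assumes "b 1 (\<lambda>_. 0) = 1"
  shows "pow_part b k k (k, \<lambda>_. 0) = 1"
proof (induction k)
  case 0
  then show ?case by (simp add: ser_one_def)
next
  case (Suc k)
  have zero_set: "{\<gamma>::nat\<Rightarrow>nat. \<forall>i. \<gamma> i = 0} = {\<lambda>_. 0}"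
    by (auto simp: fun_eq_iff)
  have "ser_mult (phi_lin b) (pow_part b k k) (Suc k, \<lambda>_. 0) =
      (\<Sum>a\<le>Suc k. phi_lin b (a, \<lambda>_. 0) * pow_part b k k (Suc k - a, \<lambda>_. 0))"
    by (simp add: ser_mult_apply zero_set)
  also have "\<dots> = (\<Sum>a\<le>Suc k. if a = 1 then 1 else 0)"
    by (intro sum.cong refl) (use assms in \<open>auto simp: phi_lin_def Suc.IH\<close>)
  also have "\<dots> = 1"
    by simp
  finally show ?case by (simp add: pow_part_above)
qed

(* s_coeff b f j is the coefficient e_j of s^j in f(phi(s,t,x),t,x). *)
definition s_coeff :: "(nat \<Rightarrow> (nat \<Rightarrow> nat) \<Rightarrow> complex) \<Rightarrow> ser3 \<Rightarrow> nat \<Rightarrow> ser" where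
  "s_coeff b f j = (\<lambda>(m, \<beta>). \<Sum>k\<in>{j..m}. ser_mult (\<lambda>(a, \<gamma>). f k a \<gamma>) (pow_part b k j) (m, \<beta>))"

lemma sum_triangle_swap:
  fixes h :: "nat \<Rightarrow> nat \<Rightarrow> 'a::comm_monoid_add"
  shows "(\<Sum>k\<le>m. \<Sum>j\<le>k. h k j) = (\<Sum>j\<le>m. \<Sum>k\<in>{j..m}. h k j)"
proof -
  have "(\<Sum>k\<le>m. \<Sum>j\<le>k. h k j) = (\<Sum>k\<le>m. \<Sum>j\<in>{j. j \<in> {..m} \<and> j \<le> k}. h k j)"
    by (intro sum.cong) auto
  also have "\<dots> = (\<Sum>j\<le>m. \<Sum>k\<in>{k. k \<in> {..m} \<and> j \<le> k}. h k j)"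
    by (rule sum.swap_restrict) auto
  also have "\<dots> = (\<Sum>j\<le>m. \<Sum>k\<in>{j..m}. h k j)"
    by (intro sum.cong) auto
  finally show ?thesis .
qed

lemma subst_y_phi_s:
  "subst_y f (phi_s b s) (m, \<beta>) = (\<Sum>j\<le>m. s ^ j * s_coeff b f j (m, \<beta>))"
proof -
  have "subst_y f (phi_s b s) (m, \<beta>) =
      (\<Sum>k\<le>m. \<Sum>j\<le>k. s ^ j * ser_mult (\<lambda>(a, \<gamma>). f k a \<gamma>) (pow_part b k j) (m, \<beta>))"
    unfolding subst_y_def ser_pow_phi_s by (simp add: ser_mult_sum_right)
  also have "\<dots> = (\<Sum>j\<le>m. s ^ j * s_coeff b f j (m, \<beta>))"
    by (subst sum_triangle_swap) (simp add: s_coeff_def sum_distrib_left)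
  finally show ?thesis .
qed

(* conv_set n e: the set of s for which sum_j s^j e_j(t,x) converges, the j-th term being
   taken into account only from t-degree j on. *)
definition conv_set :: "nat \<Rightarrow> (nat \<Rightarrow> ser) \<Rightarrow> complex set" where
  "conv_set n e = {s. conv_tx n (\<lambda>(m, \<beta>). \<Sum>j\<le>m. s ^ j * e j (m, \<beta>))}"

lemma conv_tx_cong:
  assumes "\<And>m \<beta>. valid_idx n \<beta> \<Longrightarrow> F (m, \<beta>) = G (m, \<beta>)"
  shows "conv_tx n F = conv_tx n G"
  unfolding conv_tx_def using assms by auto

lemma Conv_phi_conv_set: "Conv_phi n b f = conv_set n (s_coeff b f)"
  unfolding Conv_phi_def conv_set_def
  by (intro Collect_cong arg_cong[where f = "conv_tx n"]) (auto simp: subst_y_phi_s)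

(* Multi-indices below a valid one form a finite set, and proper ones have smaller size;
   this makes the recursive definition of realize terminate. *)
lemma finite_below_idx:
  assumes "valid_idx n \<beta>"
  shows "finite {\<gamma>::nat\<Rightarrow>nat. \<forall>i. \<gamma> i \<le> \<beta> i}"
proof -
  let ?M = "Max (\<beta> ` {..<n})"
  have "{\<gamma>::nat\<Rightarrow>nat. \<forall>i. \<gamma> i \<le> \<beta> i} \<subseteq>
     {f. \<forall>x. (x \<in> {..<n} \<longrightarrow> f x \<in> {..?M}) \<and> (x \<notin> {..<n} \<longrightarrow> f x = 0)}"
  proof (intro subsetI CollectI allI conjI impI)
    fix f x assume f: "f \<in> {\<gamma>::nat\<Rightarrow>nat. \<forall>i. \<gamma> i \<le> \<beta> i}"
    show "f x \<in> {..?M}" if "x \<in> {..<n}"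
      using f that Max_ge[of "\<beta> ` {..<n}" "\<beta> x"] by (auto intro: order_trans)
    show "f x = 0" if "x \<notin> {..<n}"
      using f that assms unfolding valid_idx_def by (metis le_zero_eq lessThan_iff mem_Collect_eq not_le)
  qed
  moreover have "finite {f::nat\<Rightarrow>nat. \<forall>x. (x \<in> {..<n} \<longrightarrow> f x \<in> {..?M}) \<and> (x \<notin> {..<n} \<longrightarrow> f x = 0)}"
    by (rule finite_set_of_finite_funs) simp_all
  ultimately show ?thesis by (rule finite_subset)
qed

lemma idx_size_less:
  assumes "valid_idx n \<beta>" "\<forall>i. \<gamma> i \<le> \<beta> i" "\<gamma> \<noteq> \<beta>"
  shows "idx_size n \<gamma> < idx_size n \<beta>"
proof -
  obtain i where i: "\<gamma> i < \<beta> i"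
    using assms(2,3) by (metis ext le_neq_implies_less)
  then have "i < n"
    using assms(1) unfolding valid_idx_def by (metis not_le not_less_zero)
  then show ?thesis unfolding idx_size_def
    using assms(2) i by (intro sum_strict_mono_ex1) auto
qed

(* realize n b e j a \<beta> is the coefficient of y^j t^a x^\<beta> of a series g with
   s_coeff b g = e.  The coefficient of t^(a+j) x^\<beta> in s_coeff b g j is
   realize j a \<beta> * pow_part b j j (j, 0) = realize j a \<beta> plus terms involving realize k a' \<gamma>
   with a'+k < a+j (higher k, by pow_part_low_order) or with a'+k = a+j and \<gamma> < \<beta>;
   we solve for realize j a \<beta>. *)
context
  fixes n :: nat and b :: "nat \<Rightarrow> (nat \<Rightarrow> nat) \<Rightarrow> complex" and e :: "nat \<Rightarrow> ser"
begin

function realize :: "nat \<Rightarrow> nat \<Rightarrow> (nat \<Rightarrow> nat) \<Rightarrow> complex" where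
  "realize j a \<beta> = (if valid_idx n \<beta> then e j (a + j, \<beta>)
     - (\<Sum>k\<in>{j<..a+j}. \<Sum>a'\<le>a+j. \<Sum>\<gamma>\<in>{\<gamma>. \<forall>i. \<gamma> i \<le> \<beta> i}.
          if a' + 2 * k \<le> a + 2 * j
          then realize k a' \<gamma> * pow_part b k j (a + j - a', \<lambda>i. \<beta> i - \<gamma> i) else 0)
     - (\<Sum>\<gamma>\<in>{\<gamma>. \<forall>i. \<gamma> i \<le> \<beta> i}.
          if \<gamma> \<noteq> \<beta> then realize j a \<gamma> * pow_part b j j (j, \<lambda>i. \<beta> i - \<gamma> i) else 0)
   else 0)"
  by pat_completeness auto
termination
  by (relation "inv_image (less_than <*lex*> less_than) (\<lambda>(j, a, \<beta>). (a + j, idx_size n \<beta>))")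
     (auto simp: idx_size_less)

end

declare realize.simps [simp del]

(* Fix the coefficient of t^(a+j) x^\<beta> in s_coeff b g j.  The terms k > j only involve
   a' + 2k <= a + 2j, by the t-order of pow_part b k j. *)
lemma s_coeff_high_terms:
  assumes "j < k"
  shows "(\<Sum>a'\<le>a+j. \<Sum>\<gamma>\<in>S. g a' \<gamma> * pow_part b k j (a + j - a', \<lambda>i. \<beta> i - \<gamma> i)) =
         (\<Sum>a'\<le>a+j. \<Sum>\<gamma>\<in>S. if a' + 2 * k \<le> a + 2 * j
                          then g a' \<gamma> * pow_part b k j (a + j - a', \<lambda>i. \<beta> i - \<gamma> i) else 0)"
  using assms by (intro sum.cong refl) (auto intro!: pow_part_low_order)

lemma s_coeff_diag_term:
  assumes b1: "b 1 (\<lambda>_. 0) = 1" and fin: "finite S" and "\<beta> \<in> S"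
  shows "(\<Sum>a'\<le>a+j. \<Sum>\<gamma>\<in>S. g a' \<gamma> * pow_part b j j (a + j - a', \<lambda>i. \<beta> i - \<gamma> i)) =
         g a \<beta> + (\<Sum>\<gamma>\<in>S. if \<gamma> \<noteq> \<beta> then g a \<gamma> * pow_part b j j (j, \<lambda>i. \<beta> i - \<gamma> i) else 0)"
proof -
  have "(\<Sum>a'\<le>a+j. \<Sum>\<gamma>\<in>S. g a' \<gamma> * pow_part b j j (a + j - a', \<lambda>i. \<beta> i - \<gamma> i)) =
      (\<Sum>a'\<le>a+j. if a' = a then (\<Sum>\<gamma>\<in>S. g a \<gamma> * pow_part b j j (j, \<lambda>i. \<beta> i - \<gamma> i)) else 0)"
    by (intro sum.cong refl) (auto simp: pow_part_diag_degree)
  also have "\<dots> = (\<Sum>\<gamma>\<in>S. g a \<gamma> * pow_part b j j (j, \<lambda>i. \<beta> i - \<gamma> i))"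
    by simp
  also have "\<dots> = (\<Sum>\<gamma>\<in>S. (if \<gamma> = \<beta> then g a \<gamma> else 0)
      + (if \<gamma> \<noteq> \<beta> then g a \<gamma> * pow_part b j j (j, \<lambda>i. \<beta> i - \<gamma> i) else 0))"
    using pow_part_diag_one[of b j, OF b1] by (intro sum.cong refl) simp
  also have "\<dots> = g a \<beta> +
      (\<Sum>\<gamma>\<in>S. if \<gamma> \<noteq> \<beta> then g a \<gamma> * pow_part b j j (j, \<lambda>i. \<beta> i - \<gamma> i) else 0)"
    using fin \<open>\<beta> \<in> S\<close> by (simp add: sum.distrib)
  finally show ?thesis .
qed

lemma s_coeff_realize:
  assumes b1: "b 1 (\<lambda>_. 0) = 1" and v: "valid_idx n \<beta>"
  shows "s_coeff b (realize n b e) j (a + j, \<beta>) = e j (a + j, \<beta>)"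
proof -
  define g where "g = realize n b e"
  define S where "S = {\<gamma>::nat\<Rightarrow>nat. \<forall>i. \<gamma> i \<le> \<beta> i}"
  define term_k where
    "term_k k = (\<Sum>a'\<le>a+j. \<Sum>\<gamma>\<in>S. g k a' \<gamma> * pow_part b k j (a + j - a', \<lambda>i. \<beta> i - \<gamma> i))" for k
  define lower where
    "lower = (\<Sum>\<gamma>\<in>S. if \<gamma> \<noteq> \<beta> then g j a \<gamma> * pow_part b j j (j, \<lambda>i. \<beta> i - \<gamma> i) else 0)"
  define higher where
    "higher = (\<Sum>k\<in>{j<..a+j}. \<Sum>a'\<le>a+j. \<Sum>\<gamma>\<in>S. if a' + 2 * k \<le> a + 2 * j
                 then g k a' \<gamma> * pow_part b k j (a + j - a', \<lambda>i. \<beta> i - \<gamma> i) else 0)"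
  have split: "{j..a+j} = insert j {j<..a+j}"
    by auto
  have "s_coeff b g j (a + j, \<beta>) = term_k j + (\<Sum>k\<in>{j<..a+j}. term_k k)"
    unfolding s_coeff_def term_k_def S_def by (simp add: ser_mult_apply split)
  also have "\<dots> = g j a \<beta> + lower + higher"
    unfolding term_k_def lower_def higher_def
    using s_coeff_diag_term[where b = b and g = "g j" and \<beta> = \<beta>, OF b1 finite_below_idx[OF v]]
    by (simp add: S_def s_coeff_high_terms)
  also have "\<dots> = e j (a + j, \<beta>)"
    using realize.simps[of n b e j a \<beta>] v
    unfolding g_def lower_def higher_def S_def by simp
  finally show ?thesis unfolding g_def .
qed

lemma Conv_phi_realize:
  assumes "b 1 (\<lambda>_. 0) = 1"
  shows "Conv_phi n b (realize n b e) = conv_set n e"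
  unfolding Conv_phi_conv_set conv_set_def
proof (intro Collect_cong conv_tx_cong)
  fix s :: complex and m :: nat and \<beta> assume v: "valid_idx n \<beta>"
  have "s_coeff b (realize n b e) j (m, \<beta>) = e j (m, \<beta>)" if "j \<le> m" for j
    using that s_coeff_realize[where b = b and e = e and j = j and a = "m - j", OF assms v] by simp
  then show "(\<lambda>(m, \<beta>). \<Sum>j\<le>m. s ^ j * s_coeff b (realize n b e) j (m, \<beta>)) (m, \<beta>) =
             (\<lambda>(m, \<beta>). \<Sum>j\<le>m. s ^ j * e j (m, \<beta>)) (m, \<beta>)"
    by simp
qed

lemma pow_le_max: "(C::real) ^ k \<le> (max \<bar>C\<bar> 1) ^ k"
proof -
  have "C ^ k \<le> \<bar>C\<bar> ^ k" by (metis abs_ge_self power_abs)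
  also have "\<dots> \<le> (max \<bar>C\<bar> 1) ^ k" by (intro power_mono) auto
  finally show ?thesis .
qed

(* stretch D F is F(t^D, x); it converges iff F does. *)
definition stretch :: "nat \<Rightarrow> ser \<Rightarrow> ser" where
  "stretch D F = (\<lambda>(m, \<beta>). if D dvd m then F (m div D, \<beta>) else 0)"

lemma conv_tx_stretch:
  assumes D: "1 \<le> D"
  shows "conv_tx n (stretch D F) = conv_tx n F"
proof
  assume "conv_tx n (stretch D F)"
  then obtain C :: real where C: "\<And>a \<gamma>. valid_idx n \<gamma> \<Longrightarrow> (a, \<gamma>) \<noteq> (0, \<lambda>_. 0) \<Longrightarrow>
      norm (stretch D F (a, \<gamma>)) \<le> C ^ (a + idx_size n \<gamma>)"
    unfolding conv_tx_def by blast
  define C' where "C' = max \<bar>C\<bar> 1"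
  show "conv_tx n F" unfolding conv_tx_def
  proof (intro exI[of _ "C' ^ D"] allI impI)
    fix a :: nat and \<gamma> assume h: "valid_idx n \<gamma> \<and> (a, \<gamma>) \<noteq> (0, \<lambda>_. 0)"
    then have "norm (F (a, \<gamma>)) \<le> C ^ (D * a + idx_size n \<gamma>)"
      using C[of \<gamma> "D * a"] D by (auto simp: stretch_def)
    also have "\<dots> \<le> C' ^ (D * a + idx_size n \<gamma>)"
      unfolding C'_def by (rule pow_le_max)
    also have "\<dots> \<le> C' ^ (D * (a + idx_size n \<gamma>))"
      using D by (intro power_increasing) (auto simp: C'_def algebra_simps)
    finally show "norm (F (a, \<gamma>)) \<le> (C' ^ D) ^ (a + idx_size n \<gamma>)"
      by (simp add: power_mult)
  qed
next
  assume "conv_tx n F"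
  then obtain C :: real where C: "\<And>a \<gamma>. valid_idx n \<gamma> \<Longrightarrow> (a, \<gamma>) \<noteq> (0, \<lambda>_. 0) \<Longrightarrow>
      norm (F (a, \<gamma>)) \<le> C ^ (a + idx_size n \<gamma>)"
    unfolding conv_tx_def by blast
  define C' where "C' = max \<bar>C\<bar> 1"
  show "conv_tx n (stretch D F)" unfolding conv_tx_def
  proof (intro exI[of _ C'] allI impI)
    fix m :: nat and \<gamma> assume h: "valid_idx n \<gamma> \<and> (m, \<gamma>) \<noteq> (0, \<lambda>_. 0)"
    show "norm (stretch D F (m, \<gamma>)) \<le> C' ^ (m + idx_size n \<gamma>)"
    proof (cases "D dvd m")
      case True
      then obtain q where q: "m = D * q" by blast
      then have "norm (F (q, \<gamma>)) \<le> C ^ (q + idx_size n \<gamma>)"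
        using C h by auto
      also have "\<dots> \<le> C' ^ (q + idx_size n \<gamma>)"
        unfolding C'_def by (rule pow_le_max)
      also have "\<dots> \<le> C' ^ (m + idx_size n \<gamma>)"
        using D q by (intro power_increasing) (auto simp: C'_def)
      finally show ?thesis using D q by (simp add: stretch_def)
    next
      case False
      then show ?thesis by (simp add: stretch_def C'_def)
    qed
  qed
qed

lemma poly_as_sum:
  fixes p :: "'a::comm_semiring_1 poly"
  assumes "degree p \<le> m"
  shows "(\<Sum>i\<le>m. coeff p i * x ^ i) = poly p x"
proof -
  have "(\<Sum>i\<le>m. coeff p i * x ^ i) = (\<Sum>i\<le>degree p. coeff p i * x ^ i)"
    by (rule sum.mono_neutral_right) (use assms in \<open>auto simp: coeff_eq_0\<close>)
  then show ?thesis by (simp only: poly_altdef)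
qed

(* Closure under polynomial preimages: sum_j P(s)^j e_j(t^D, x), re-expanded in powers of s,
   is again of the required triangular shape as soon as D >= deg P. *)
lemma conv_set_poly_preimage:
  fixes P :: "complex poly"
  shows "\<exists>e'. conv_set n e' = poly P -` conv_set n e"
proof -
  define D where "D = max 1 (degree P)"
  have D1: "1 \<le> D" by (simp add: D_def)
  define e' where "e' i = (\<lambda>(m, \<beta>). if D dvd m then
      (\<Sum>j\<le>m div D. e j (m div D, \<beta>) * coeff (P ^ j) i) else 0)" for i
  have expand: "(\<lambda>(m, \<beta>). \<Sum>i\<le>m. s ^ i * e' i (m, \<beta>)) =
      stretch D (\<lambda>(m, \<beta>). \<Sum>j\<le>m. (poly P s) ^ j * e j (m, \<beta>))" for s
  proof (intro ext, clarify)
    fix m \<beta>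
    show "(\<Sum>i\<le>m. s ^ i * e' i (m, \<beta>)) =
      stretch D (\<lambda>(m, \<beta>). \<Sum>j\<le>m. (poly P s) ^ j * e j (m, \<beta>)) (m, \<beta>)"
    proof (cases "D dvd m")
      case True
      then obtain q where q: "m = D * q" by blast
      have qd: "m div D = q" using q D1 by simp
      have deg: "degree (P ^ j) \<le> m" if "j \<le> q" for j
        using degree_power_le[of P j] q that mult_le_mono[of j q "degree P" D]
        by (simp add: D_def mult.commute)
      have "(\<Sum>i\<le>m. s ^ i * e' i (m, \<beta>)) =
          (\<Sum>i\<le>m. \<Sum>j\<le>q. e j (q, \<beta>) * (coeff (P ^ j) i * s ^ i))"
        using True qd by (simp add: e'_def sum_distrib_left algebra_simps)
      also have "\<dots> = (\<Sum>j\<le>q. e j (q, \<beta>) * (\<Sum>i\<le>m. coeff (P ^ j) i * s ^ i))"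
        by (subst sum.swap) (simp add: sum_distrib_left)
      also have "\<dots> = (\<Sum>j\<le>q. e j (q, \<beta>) * poly (P ^ j) s)"
        using deg by (intro sum.cong refl) (simp add: poly_as_sum)
      finally show ?thesis using True qd by (simp add: stretch_def mult.commute)
    next
      case False
      then show ?thesis by (simp add: e'_def stretch_def)
    qed
  qed
  have "conv_set n e' = poly P -` conv_set n e"
    unfolding conv_set_def expand conv_tx_stretch[OF D1] by auto
  then show ?thesis by blast
qed

(* For s /= 0, the numbers |s|^m m! are not geometrically bounded (as x^m/m! -> 0). *)
lemma fact_pow_unbounded:
  assumes "s \<noteq> (0::complex)"
  shows "\<not> (\<forall>m\<ge>1. norm (s ^ m * fact m) \<le> C ^ m)"
proof
  assume H: "\<forall>m\<ge>1. norm (s ^ m * fact m) \<le> C ^ m"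
  define x where "x = C / norm s"
  have ns: "norm s > 0" using assms by simp
  have "(\<lambda>m. inverse (fact m) * x ^ m) \<longlonglongrightarrow> 0"
    by (rule summable_LIMSEQ_zero[OF summable_exp])
  then have "eventually (\<lambda>m. norm (inverse (fact m) * x ^ m) < 1) sequentially"
    by (auto dest: order_tendstoD(2)[OF tendsto_norm, where a = 1])
  then obtain M where M: "\<And>m. m \<ge> M \<Longrightarrow> norm (inverse (fact m) * x ^ m) < 1"
    by (auto simp: eventually_sequentially)
  define m where "m = max M 1"
  have lt: "\<bar>x ^ m\<bar> / fact m < 1"
    using M[of m] by (simp add: m_def abs_mult divide_inverse mult.commute)
  have "norm s ^ m * fact m \<le> C ^ m"
    using H[rule_format, of m] by (simp add: m_def norm_mult norm_power)
  also have "C ^ m = x ^ m * norm s ^ m"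
    using ns by (simp add: x_def power_divide)
  also have "\<dots> \<le> \<bar>x ^ m\<bar> * norm s ^ m"
    by (intro mult_right_mono) auto
  also have "\<dots> < fact m * norm s ^ m"
    using lt ns by (intro mult_strict_right_mono) (auto simp: divide_less_eq)
  finally show False by (simp add: mult.commute)
qed

lemma conv_set_singleton_zero: "\<exists>e. conv_set n e = {0}"
proof -
  define e :: "nat \<Rightarrow> ser" where
    "e i = (\<lambda>(m, \<beta>). if i = m \<and> \<beta> = (\<lambda>_. 0) then fact m else 0)" for i
  define F :: "complex \<Rightarrow> ser" where
    "F s = (\<lambda>(m, \<beta>). if \<beta> = (\<lambda>_. 0) then s ^ m * fact m else 0)" for s
  have series: "(\<lambda>(m, \<beta>). \<Sum>i\<le>m. s ^ i * e i (m, \<beta>)) = F s" for s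
    by (auto simp: e_def F_def fun_eq_iff if_distrib cong: if_cong)
  have "conv_tx n (F s) \<longleftrightarrow> s = 0" for s
  proof
    assume "conv_tx n (F s)"
    then obtain C :: real where C: "\<And>a \<gamma>. valid_idx n \<gamma> \<Longrightarrow> (a, \<gamma>) \<noteq> (0, \<lambda>_. 0) \<Longrightarrow>
        norm (F s (a, \<gamma>)) \<le> C ^ (a + idx_size n \<gamma>)"
      unfolding conv_tx_def by auto
    have "\<forall>m\<ge>1. norm (s ^ m * fact m) \<le> C ^ m"
      using C[of "\<lambda>_. 0"] by (simp add: F_def valid_idx_def idx_size_def)
    then show "s = 0" using fact_pow_unbounded[of s C] by blast
  next
    assume "s = 0"
    then show "conv_tx n (F s)"
      unfolding conv_tx_def F_def by (intro exI[of _ 1]) (auto simp: zero_power)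
  qed
  then have "conv_set n e = {0}"
    unfolding conv_set_def series by auto
  then show ?thesis by blast
qed

(* Closure under s |-> c*s: for c /= 0 it is the preimage under the polynomial s/c,
   for c = 0 the image is empty or {0}. *)
lemma conv_set_scale: "\<exists>e'. conv_set n e' = (\<lambda>s. c * s) ` conv_set n e"
proof (cases "c = 0")
  case False
  have "(\<lambda>s. c * s) ` A = poly [:0, inverse c:] -` A" for A :: "complex set"
    using False by (auto simp: image_iff field_simps intro!: bexI[where x = "_ / c"])
  then show ?thesis using conv_set_poly_preimage[of n "[:0, inverse c:]" e] by simp
next
  case True
  show ?thesis
  proof (cases "conv_set n e = {}")
    case True
    then show ?thesis by auto
  next
    case False
    then have "(\<lambda>s. c * s) ` conv_set n e = {0}" using \<open>c = 0\<close> by auto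
    then show ?thesis using conv_set_singleton_zero by metis
  qed
qed

theorem mainTheorem6:
  fixes n :: nat
    and b :: "nat \<Rightarrow> (nat \<Rightarrow> nat) \<Rightarrow> complex"
    and f :: ser3
    and c :: complex
    and P :: "complex poly"
  assumes phi_conv: "conv_tx n (phi_ser b)"
    and b_conv: "\<forall>j\<ge>1. conv_x n (b j)"
    and b1: "b 1 (\<lambda>_. 0) = 1"
    and monic: "lead_coeff P = 1"
  shows "\<exists>g h :: ser3. Conv_phi n b g = poly P -` Conv_phi n b f
           \<and> Conv_phi n b h = (\<lambda>s. c * s) ` Conv_phi n b f"
proof -
  obtain eg where eg: "conv_set n eg = poly P -` Conv_phi n b f"
    using conv_set_poly_preimage[where n = n and P = P and e = "s_coeff b f"] by (auto simp: Conv_phi_conv_set)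
  obtain eh where eh: "conv_set n eh = (\<lambda>s. c * s) ` Conv_phi n b f"
    using conv_set_scale[where n = n and e = "s_coeff b f" and c = c] by (auto simp: Conv_phi_conv_set)
  show ?thesis
    using Conv_phi_realize[where b = b and e = eg, OF b1] Conv_phi_realize[where b = b and e = eh, OF b1] eg eh by blast
qed

end
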